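(* Let $\mathbf{x}_1,\ldots,\mathbf{x}_n\in\mathbb{S}^{d-1}$ be distinct. Then the matrix $\mathbf{H}^\infty\in\mathbb{R}^{n\times n}$ with entries $$H^\infty_{ij}=\frac{(\mathbf{x}_i^\top\mathbf{x}_j+1)\,(\pi-\arccos(\mathbf{x}_i^\top\mathbf{x}_j))}{4\pi}$$ is symmetric and positive definite.
   Context: $d\ge 2$ and $\mathbb{S}^{d-1}\subset\mathbb{R}^d$ is the unit sphere. Equivalently, $H^\infty_{ij}=\mathbb{E}_{\mathbf{w}\sim\mathcal{N}(\mathbf{0},\kappa^2\mathbf{I})}\big[\tfrac{\mathbf{x}_i^\top\mathbf{x}_j+1}{2}\,\mathbb{I}_{\{\mathbf{w}^\top\mathbf{x}_i\ge 0,\ \mathbf{w}^\top\mathbf{x}_j\ge 0\}}\big]$ for any $\kappa>0$. No assumption is made excluding antipodal pairs $\mathbf{x}_i=-\mathbf{x}_j$. *)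

theory Defs
  imports "HOL-Analysis.Analysis"
begin

definition symmetric_matrix :: "real^'n^'n \<Rightarrow> bool" where
  "symmetric_matrix A \<longleftrightarrow> transpose A = A"

definition pos_def_matrix :: "real^'n^'n \<Rightarrow> bool" where
  "pos_def_matrix A \<longleftrightarrow> (\<forall>v. v \<noteq> 0 \<longrightarrow> v \<bullet> (A *v v) > 0)"

definition H_inf :: "('n::finite \<Rightarrow> real^'d) \<Rightarrow> real^'n^'n" where
  "H_inf x = (\<chi> i j. ((x i \<bullet> x j + 1) * (pi - arccos (x i \<bullet> x j))) / (4 * pi))"

end

(*
  Since pi - arccos t = pi/2 + arcsin t, the kernel (t + 1) (pi - arccos t) / (4 pi) equals
  (1 + t)/8 + (1 + t) arcsin t / (4 pi), a power series sum_k c_k t^k on [-1, 1] whose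
  coefficients are all strictly positive. Hence v^T H v = sum_k c_k sum_ij v_i v_j (x_i . x_j)^k,
  and every Gram power ((x_i . x_j)^k) is positive semidefinite by the Schur product theorem.
  If the form vanishes, each Gram power annihilates v, so sum_i v_i (x_i . x_m)^k = 0 for all
  k and m. The numbers x_i . x_m lie in [-1, 1] and equal 1 only for i = m, so along the
  combinations (x_i . x_m)^(2n) (1 + x_i . x_m) every term but the m-th dies out as n grows,
  antipodal points included, and v_m = 0 follows.
*)

theory Submission
  imports Defs
begin

section \<open>Quadratic forms\<close>

definition quad_form :: "('i::finite \<Rightarrow> 'i \<Rightarrow> real) \<Rightarrow> ('i \<Rightarrow> real) \<Rightarrow> real" where
  "quad_form A v = (\<Sum>i\<in>UNIV. \<Sum>j\<in>UNIV. v i * v j * A i j)"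

lemma inner_matrix_vector_mult_eq_quad_form:
  fixes A :: "real^'n^'n"
  shows "v \<bullet> (A *v v) = quad_form (\<lambda>i j. A $ i $ j) (\<lambda>i. v $ i)"
  unfolding quad_form_def matrix_vector_mult_def inner_vec_def
  by (simp add: sum_distrib_left mult_ac)

lemma quad_form_scale: "quad_form (\<lambda>i j. a * A i j) v = a * quad_form A v"
  unfolding quad_form_def by (simp add: sum_distrib_left mult_ac)

lemma quad_form_sums:
  assumes "\<And>i j. (\<lambda>k. B k i j) sums A i j"
  shows "(\<lambda>k. quad_form (B k) v) sums quad_form A v"
  unfolding quad_form_def by (intro sums_sum sums_mult assms)

lemma quad_form_inner_power_nonneg:
  fixes x :: "'i::finite \<Rightarrow> 'a::euclidean_space"
  shows "quad_form (\<lambda>i j. (x i \<bullet> x j) ^ k) v \<ge> 0"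
proof (induction k arbitrary: v)
  case 0
  have "quad_form (\<lambda>i j. (x i \<bullet> x j) ^ 0) v = (\<Sum>i\<in>UNIV. v i)\<^sup>2"
    unfolding quad_form_def power2_eq_square by (simp add: sum_product)
  then show ?case by simp
next
  case (Suc k)
  \<comment> \<open>Schur product theorem: expanding one factor along the basis writes the (k+1)-st
     Gram power as a sum of k-th ones with reweighted vectors.\<close>
  have "quad_form (\<lambda>i j. (x i \<bullet> x j) ^ Suc k) v =
        (\<Sum>b\<in>Basis. quad_form (\<lambda>i j. (x i \<bullet> x j) ^ k) (\<lambda>i. v i * (x i \<bullet> b)))"
    unfolding quad_form_def euclidean_inner[of "x _" "x _"]
    by (subst sum.swap, rule sum.cong, simp, subst sum.swap)
       (simp add: sum_distrib_left sum_distrib_right mult_ac)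
  also have "\<dots> \<ge> 0"
    by (intro sum_nonneg Suc.IH)
  finally show ?case .
qed

lemma quad_form_zero_imp_kernel:
  assumes sym: "\<And>i j. A i j = A j i"
    and psd: "\<And>u. quad_form A u \<ge> 0"
    and zero: "quad_form A v = 0"
  shows "(\<Sum>i\<in>UNIV. v i * A i m) = 0"
proof -
  define g where "g = (\<Sum>i\<in>UNIV. v i * A i m)"
  have outer_delta: "(\<Sum>i\<in>UNIV. \<Sum>j\<in>UNIV. if i = m then h j else 0) = (\<Sum>j\<in>UNIV. h j)"
    for h :: "_ \<Rightarrow> real"
    by (subst sum.swap) simp
  \<comment> \<open>Moving v by s along the m-th unit vector changes the form to 2 s g + s^2 A m m,
     which can stay nonnegative for all s only if g = 0.\<close>
  have shift: "quad_form A (\<lambda>i. v i + (if i = m then s else 0)) = 2 * s * g + s\<^sup>2 * A m m" for s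
  proof -
    have "quad_form A (\<lambda>i. v i + (if i = m then s else 0)) =
          quad_form A v + s * (\<Sum>i\<in>UNIV. v i * A i m) + s * (\<Sum>j\<in>UNIV. v j * A m j) + s\<^sup>2 * A m m"
      unfolding quad_form_def
      by (simp add: outer_delta algebra_simps sum.distrib sum_distrib_left if_distrib[of "\<lambda>a. a * _"]
               if_distrib[of "\<lambda>a. _ * a"] sum.delta power2_eq_square cong: if_cong)
    then show ?thesis
      using zero sym unfolding g_def by (simp add: algebra_simps)
  qed
  have "A m m \<ge> 0"
    using psd[of "\<lambda>i. if i = m then 1 else 0"]
    unfolding quad_form_def by (simp add: outer_delta if_distrib[of "\<lambda>a. a * _"] cong: if_cong)
  define d where "d = A m m + 1"
  have "d > 0"
    using \<open>A m m \<ge> 0\<close> unfolding d_def by simp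
  have "0 \<le> d\<^sup>2 * (2 * (- g / d) * g + (- g / d)\<^sup>2 * A m m)"
    using psd[of "\<lambda>i. v i + (if i = m then - g / d else 0)"] unfolding shift by simp
  also have "\<dots> = - g\<^sup>2 * (A m m + 2)"
    using \<open>d > 0\<close> by (simp add: field_simps power2_eq_square) (simp add: d_def algebra_simps)
  finally have "g\<^sup>2 * (A m m + 2) \<le> 0"
    by simp
  with \<open>A m m \<ge> 0\<close> have "g = 0"
    by (simp add: mult_le_0_iff)
  then show ?thesis
    unfolding g_def .
qed

section \<open>Power series kernels on the unit sphere\<close>

lemma power_sums_eq_0_imp_eq_0:
  fixes a v :: "'i::finite \<Rightarrow> real"
  assumes bounded: "\<And>i. \<bar>a i\<bar> \<le> 1"
    and peak: "\<And>i. a i = 1 \<longleftrightarrow> i = m"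
    and vanish: "\<And>k. (\<Sum>i\<in>UNIV. v i * a i ^ k) = 0"
  shows "v m = 0"
proof -
  \<comment> \<open>The factor 1 + a i also kills the terms with a i = -1.\<close>
  have term_lim: "(\<lambda>n. v i * (a i ^ 2) ^ n * (1 + a i)) \<longlonglongrightarrow> (if i = m then 2 * v m else 0)" for i
  proof (cases "i = m \<or> a i = -1")
    case True
    then show ?thesis
      using peak[of i] by (auto simp: mult.commute)
  next
    case False
    then have "\<bar>a i\<bar> < 1"
      using bounded[of i] peak[of i] by auto
    then have "(\<lambda>n. (a i ^ 2) ^ n) \<longlonglongrightarrow> 0"
      by (intro LIMSEQ_realpow_zero) (auto simp: abs_square_less_1)
    then have "(\<lambda>n. v i * (a i ^ 2) ^ n * (1 + a i)) \<longlonglongrightarrow> v i * 0 * (1 + a i)"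
      by (intro tendsto_mult tendsto_const)
    then show ?thesis
      using False by simp
  qed
  have "(\<lambda>n. \<Sum>i\<in>UNIV. v i * (a i ^ 2) ^ n * (1 + a i)) \<longlonglongrightarrow>
        (\<Sum>i\<in>UNIV. if i = m then 2 * v m else 0)"
    by (intro tendsto_sum term_lim)
  moreover have "(\<Sum>i\<in>UNIV. v i * (a i ^ 2) ^ n * (1 + a i)) = 0" for n
    using vanish[of "2 * n"] vanish[of "2 * n + 1"]
    by (simp add: power_mult[symmetric] algebra_simps sum.distrib)
  ultimately have "(\<lambda>n. 0) \<longlonglongrightarrow> 2 * v m"
    by simp
  then show ?thesis
    by (simp add: LIMSEQ_const_iff)
qed

lemma inner_eq_1_imp_eq:
  fixes x y :: "'a::real_inner"
  assumes "norm x = 1" "norm y = 1" "x \<bullet> y = 1"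
  shows "x = y"
  using assms norm_cauchy_schwarz_eq[of x y] by simp

lemma quad_form_powser_pos:
  fixes x :: "'i::finite \<Rightarrow> 'a::euclidean_space"
  assumes series: "\<And>t. \<bar>t\<bar> \<le> 1 \<Longrightarrow> (\<lambda>k. c k * t ^ k) sums f t"
    and pos: "\<And>k. c k > 0"
    and unit: "\<And>i. norm (x i) = 1"
    and "inj x"
    and "v m \<noteq> 0"
  shows "quad_form (\<lambda>i j. f (x i \<bullet> x j)) v > 0"
proof (rule ccontr)
  define Q where "Q k = quad_form (\<lambda>i j. (x i \<bullet> x j) ^ k) v" for k
  have bounded: "\<bar>x i \<bullet> x j\<bar> \<le> 1" for i j
    using Cauchy_Schwarz_ineq2[of "x i" "x j"] unit by simp
  have "(\<lambda>k. c k * Q k) sums quad_form (\<lambda>i j. f (x i \<bullet> x j)) v"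
    unfolding Q_def quad_form_scale[symmetric] by (intro quad_form_sums series bounded)
  moreover have "c k * Q k \<ge> 0" for k
    using pos[of k] quad_form_inner_power_nonneg[of x k v] unfolding Q_def by simp
  moreover assume "\<not> quad_form (\<lambda>i j. f (x i \<bullet> x j)) v > 0"
  ultimately have nonpos: "c k * Q k \<le> 0" for k
    using sum_le_suminf[of "\<lambda>k. c k * Q k" "{k}"] by (fastforce simp: sums_iff)
  have "Q k \<le> 0" for k
    using nonpos[of k] pos[of k] by (simp add: mult_le_0_iff)
  then have "Q k = 0" for k
    using quad_form_inner_power_nonneg[of x k v] unfolding Q_def by (simp add: antisym)
  then have moments: "(\<Sum>i\<in>UNIV. v i * (x i \<bullet> x m) ^ k) = 0" for k m
    unfolding Q_def by (intro quad_form_zero_imp_kernel quad_form_inner_power_nonneg)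
       (simp_all add: inner_commute)
  have "v m = 0"
  proof (rule power_sums_eq_0_imp_eq_0[OF bounded _ moments])
    show "x i \<bullet> x m = 1 \<longleftrightarrow> i = m" for i
      using inner_eq_1_imp_eq[OF unit unit] unit[of m] \<open>inj x\<close>
      by (auto simp: dot_square_norm inj_eq)
  qed
  with \<open>v m \<noteq> 0\<close> show False
    by contradiction
qed

section \<open>The power series of arcsin\<close>

lemma nonneg_powser_sums_at_left_1:
  fixes c :: "nat \<Rightarrow> real"
  assumes nonneg: "\<And>k. c k \<ge> 0"
    and sums: "\<And>t. 0 < t \<Longrightarrow> t < 1 \<Longrightarrow> (\<lambda>k. c k * t ^ k) sums f t"
    and lim: "(f \<longlongrightarrow> L) (at_left 1)"
  shows "c sums L"
proof -
  have near_1: "eventually (\<lambda>t. t \<in> {0<..<1}) (at_left (1::real))"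
    by (rule eventually_at_left_real) simp
  have partial_le: "sum c {..<N} \<le> L" for N
  proof -
    have "((\<lambda>t. \<Sum>k<N. c k * t ^ k) \<longlongrightarrow> (\<Sum>k<N. c k * 1 ^ k)) (at_left 1)"
      by (intro tendsto_intros)
    moreover have "eventually (\<lambda>t. (\<Sum>k<N. c k * t ^ k) \<le> f t) (at_left 1)"
      using near_1
    proof eventually_elim
      case (elim t)
      then have "(\<lambda>k. c k * t ^ k) sums f t"
        by (intro sums) auto
      moreover have "c k * t ^ k \<ge> 0" for k
        using elim nonneg[of k] by simp
      ultimately show ?case
        by (metis sums_iff sum_le_suminf finite_lessThan)
    qed
    ultimately have "(\<Sum>k<N. c k * 1 ^ k) \<le> L"
      using tendsto_le[OF trivial_limit_at_left_real lim] by blast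
    then show ?thesis
      by simp
  qed
  have "summable c"
    using nonneg partial_le[of "Suc _"] by (intro bounded_imp_summable[of _ L]) (simp_all only: lessThan_Suc_atMost)
  have "eventually (\<lambda>t. f t \<le> suminf c) (at_left 1)"
    using near_1
  proof eventually_elim
    case (elim t)
    then have "c k * t ^ k \<le> c k" for k
      using nonneg[of k] by (simp add: mult_left_le power_le_one)
    moreover have "(\<lambda>k. c k * t ^ k) sums f t"
      using elim by (intro sums) auto
    ultimately show ?case
      using \<open>summable c\<close> suminf_le[of "\<lambda>k. c k * t ^ k" c] by (simp add: sums_iff)
  qed
  then have "L \<le> suminf c"
    using tendsto_le[OF trivial_limit_at_left_real tendsto_const lim] by blast
  moreover have "suminf c \<le> L"
    using \<open>summable c\<close> partial_le by (rule suminf_le_const)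
  ultimately show ?thesis
    using \<open>summable c\<close> by (simp add: sums_iff)
qed

lemma gbinomial_minus_half_pos: "((real n - 1/2) gchoose n) > 0"
  unfolding gbinomial_prod_rev by (intro divide_pos_pos prod_pos) auto

lemma gbinomial_minus_half: "((-1/2) gchoose n) = (-1) ^ n * ((real n - 1/2) gchoose n)"
  using gbinomial_minus[of "1/2::real" n] by (simp add: algebra_simps)

lemma inverse_sqrt_1_minus_square_sums:
  fixes t :: real
  assumes "\<bar>t\<bar> < 1"
  shows "(\<lambda>n. ((real n - 1/2) gchoose n) * t ^ (2 * n)) sums inverse (sqrt (1 - t\<^sup>2))"
proof -
  have "t\<^sup>2 < 1"
    using assms by (simp add: abs_square_less_1)
  then have "(\<lambda>n. ((-1/2) gchoose n) * (- t\<^sup>2) ^ n) sums (1 + - t\<^sup>2) powr (-1/2)"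
    by (intro gen_binomial_real) simp
  moreover have "((-1/2) gchoose n) * (- t\<^sup>2) ^ n = ((real n - 1/2) gchoose n) * t ^ (2 * n)" for n
    unfolding gbinomial_minus_half power_minus[of "t\<^sup>2"] power_mult
    by (simp add: power_mult_distrib[symmetric])
  moreover have "(1 + - t\<^sup>2) powr (-1/2) = inverse (sqrt (1 - t\<^sup>2))"
    using \<open>t\<^sup>2 < 1\<close> by (simp add: powr_minus powr_half_sqrt)
  ultimately show ?thesis
    by simp
qed

text \<open>((n - 1/2) gchoose n) is the central binomial coefficient (2n choose n) divided by 4^n.\<close>

definition arcsin_coeff :: "nat \<Rightarrow> real" where
  "arcsin_coeff k = (if odd k then ((real (k div 2) - 1/2) gchoose (k div 2)) / real k else 0)"

lemma arcsin_coeff_odd: "arcsin_coeff (2 * n + 1) = ((real n - 1/2) gchoose n) / (2 * real n + 1)"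
  by (simp add: arcsin_coeff_def)

lemma arcsin_coeff_nonneg: "arcsin_coeff k \<ge> 0"
  using gbinomial_minus_half_pos[of "k div 2"] by (simp add: arcsin_coeff_def)

lemma arcsin_coeff_pos: "odd k \<Longrightarrow> arcsin_coeff k > 0"
  using gbinomial_minus_half_pos[of "k div 2"] by (simp add: arcsin_coeff_def odd_pos)

lemma arcsin_odd_powser_has_derivative:
  fixes t :: real
  assumes "\<bar>t\<bar> < 1"
  shows "summable (\<lambda>n. arcsin_coeff (2 * n + 1) * t ^ (2 * n + 1))"
    and "((\<lambda>s. \<Sum>n. arcsin_coeff (2 * n + 1) * s ^ (2 * n + 1))
           has_field_derivative inverse (sqrt (1 - t\<^sup>2))) (at t)"
proof -
  obtain r where r: "\<bar>t\<bar> < r" "r < 1"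
    using dense[OF assms] by blast
  define S where "S = {-r..r}"
  have term_deriv: "((\<lambda>s. arcsin_coeff (2 * n + 1) * s ^ (2 * n + 1)) has_field_derivative
                       ((real n - 1/2) gchoose n) * s ^ (2 * n)) (at s within S)" for n s
  proof -
    have "((\<lambda>s. arcsin_coeff (2 * n + 1) * s ^ (2 * n + 1)) has_field_derivative
            arcsin_coeff (2 * n + 1) * (real (2 * n + 1) * s ^ (2 * n))) (at s within S)"
      using DERIV_pow[of "2 * n + 1" s S] by (intro DERIV_cmult) simp
    moreover have "arcsin_coeff (2 * n + 1) * (real (2 * n + 1) * s ^ (2 * n)) =
                   ((real n - 1/2) gchoose n) * s ^ (2 * n)"
      unfolding arcsin_coeff_odd by (simp add: field_simps)
    ultimately show ?thesis
      by (simp only:)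
  qed
  have "summable (\<lambda>n. ((real n - 1/2) gchoose n) * r ^ (2 * n))"
    using r inverse_sqrt_1_minus_square_sums[of r] by (simp add: sums_summable)
  then have unif: "uniformly_convergent_on S (\<lambda>N s. \<Sum>n<N. ((real n - 1/2) gchoose n) * s ^ (2 * n))"
  proof (rule Weierstrass_m_test'[rotated])
    fix n s
    assume "s \<in> S"
    then have "\<bar>s\<bar> ^ (2 * n) \<le> r ^ (2 * n)"
      unfolding S_def by (intro power_mono) auto
    then show "norm (((real n - 1/2) gchoose n) * s ^ (2 * n)) \<le> ((real n - 1/2) gchoose n) * r ^ (2 * n)"
      using gbinomial_minus_half_pos[of n] by (simp add: abs_mult power_abs)
  qed
  have "convex S" "0 \<in> S" "t \<in> interior S"
    using r unfolding S_def by auto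
  from has_field_derivative_series'[OF this(1) term_deriv unif this(2) _ this(3)]
  have "summable (\<lambda>n. arcsin_coeff (2 * n + 1) * t ^ (2 * n + 1))"
    and "((\<lambda>s. \<Sum>n. arcsin_coeff (2 * n + 1) * s ^ (2 * n + 1)) has_field_derivative
           (\<Sum>n. ((real n - 1/2) gchoose n) * t ^ (2 * n))) (at t)"
    by simp_all
  then show "summable (\<lambda>n. arcsin_coeff (2 * n + 1) * t ^ (2 * n + 1))"
    and "((\<lambda>s. \<Sum>n. arcsin_coeff (2 * n + 1) * s ^ (2 * n + 1))
           has_field_derivative inverse (sqrt (1 - t\<^sup>2))) (at t)"
    using inverse_sqrt_1_minus_square_sums[OF assms] by (simp_all add: sums_iff)
qed

lemma arcsin_odd_powser_sums:
  fixes t :: real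
  assumes "\<bar>t\<bar> < 1"
  shows "(\<lambda>n. arcsin_coeff (2 * n + 1) * t ^ (2 * n + 1)) sums arcsin t"
proof -
  define D where "D s = (\<Sum>n. arcsin_coeff (2 * n + 1) * s ^ (2 * n + 1)) - arcsin s" for s :: real
  have "D t = D 0"
  proof (rule DERIV_isconst3[of "-1" 1 t 0 D])
    fix s :: real
    assume "s \<in> {-1<..<1}"
    then have "(D has_field_derivative inverse (sqrt (1 - s\<^sup>2)) - inverse (sqrt (1 - s\<^sup>2))) (at s)"
      unfolding D_def[abs_def]
      by (intro DERIV_diff arcsin_odd_powser_has_derivative DERIV_arcsin) auto
    then show "(D has_field_derivative 0) (at s)"
      by simp
  qed (use assms in auto)
  then show ?thesis
    using arcsin_odd_powser_has_derivative(1)[OF assms] by (simp add: D_def sums_iff)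
qed

lemma arcsin_powser_sums_interior:
  fixes t :: real
  assumes "\<bar>t\<bar> < 1"
  shows "(\<lambda>k. arcsin_coeff k * t ^ k) sums arcsin t"
proof -
  have "(\<lambda>n. arcsin_coeff (2 * n + 1) * t ^ (2 * n + 1)) sums arcsin t"
    using assms by (rule arcsin_odd_powser_sums)
  moreover have "strict_mono (\<lambda>n::nat. 2 * n + 1)"
    by (rule strict_monoI) simp
  moreover have "arcsin_coeff k * t ^ k = 0" if "k \<notin> range (\<lambda>n. 2 * n + 1)" for k
    using that oddE[of k] by (auto simp: arcsin_coeff_def)
  ultimately show ?thesis
    using sums_mono_reindex[of "\<lambda>n. 2 * n + 1" "\<lambda>k. arcsin_coeff k * t ^ k"] by simp
qed

lemma arcsin_powser_sums:
  fixes t :: real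
  assumes "\<bar>t\<bar> \<le> 1"
  shows "(\<lambda>k. arcsin_coeff k * t ^ k) sums arcsin t"
proof -
  have at_1: "arcsin_coeff sums arcsin 1"
  proof (rule nonneg_powser_sums_at_left_1[OF arcsin_coeff_nonneg])
    show "(\<lambda>k. arcsin_coeff k * s ^ k) sums arcsin s" if "0 < s" "s < 1" for s
      using that by (intro arcsin_powser_sums_interior) simp
    show "(arcsin \<longlongrightarrow> arcsin 1) (at_left 1)"
      using continuous_on_Icc_at_leftD[OF continuous_on_arcsin'] by simp
  qed
  consider "\<bar>t\<bar> < 1" | "t = 1" | "t = -1"
    using assms by linarith
  then show ?thesis
  proof cases
    case 3
    have "arcsin_coeff k * (-1) ^ k = - arcsin_coeff k" for k
      by (cases "even k") (simp_all add: arcsin_coeff_def)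
    then show ?thesis
      using sums_minus[OF at_1] 3 by (simp add: arcsin_minus)
  qed (use at_1 in \<open>simp_all add: arcsin_powser_sums_interior\<close>)
qed

section \<open>The arc-cosine kernel\<close>

text \<open>For k = 0 the truncated subtraction k - 1 yields arcsin_coeff 0 = 0, as intended.\<close>

definition arccos_kernel_coeff :: "nat \<Rightarrow> real" where
  "arccos_kernel_coeff k =
     (if k \<le> 1 then 1/8 else 0) + (arcsin_coeff k + arcsin_coeff (k - 1)) / (4 * pi)"

lemma arccos_kernel_coeff_pos: "arccos_kernel_coeff k > 0"
proof -
  have "(if k \<le> 1 then 1/8 else 0) + (arcsin_coeff k + arcsin_coeff (k - 1)) / (4 * pi) > 0"
  proof (cases "k \<le> 1")
    case True
    then show ?thesis
      using arcsin_coeff_nonneg[of k] arcsin_coeff_nonneg[of "k - 1"]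
      by (auto intro!: add_pos_nonneg divide_nonneg_pos)
  next
    case False
    then have "odd k \<or> odd (k - 1)"
      by simp
    then have "arcsin_coeff k + arcsin_coeff (k - 1) > 0"
      using arcsin_coeff_pos arcsin_coeff_nonneg by (meson add_pos_nonneg add_nonneg_pos)
    then show ?thesis
      using False by simp
  qed
  then show ?thesis
    unfolding arccos_kernel_coeff_def .
qed

lemma arccos_kernel_powser_sums:
  fixes t :: real
  assumes "\<bar>t\<bar> \<le> 1"
  shows "(\<lambda>k. arccos_kernel_coeff k * t ^ k) sums ((t + 1) * (pi - arccos t) / (4 * pi))"
proof -
  have linear: "(\<lambda>k. (if k \<le> 1 then 1/8 else 0) * t ^ k) sums ((1 + t) / 8)"
    using sums_finite[of "{0, 1}" "\<lambda>k. (if k \<le> 1 then 1/8 else 0) * t ^ k"]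
    by (simp add: add_divide_distrib)
  have arcsin: "(\<lambda>k. arcsin_coeff k * t ^ k) sums arcsin t"
    using assms by (rule arcsin_powser_sums)
  have "(\<lambda>k. arcsin_coeff (Suc k - 1) * t ^ Suc k) sums (t * arcsin t)"
    using sums_mult[OF arcsin, of t] by (simp add: mult_ac)
  moreover have "arcsin_coeff 0 = 0"
    by (simp add: arcsin_coeff_def)
  ultimately have shifted: "(\<lambda>k. arcsin_coeff (k - 1) * t ^ k) sums (t * arcsin t)"
    using sums_Suc_iff[of "\<lambda>k. arcsin_coeff (k - 1) * t ^ k" "t * arcsin t"] by simp
  have "(\<lambda>k. arccos_kernel_coeff k * t ^ k) sums ((1 + t) / 8 + (arcsin t + t * arcsin t) / (4 * pi))"
    using sums_add[OF linear sums_divide[OF sums_add[OF arcsin shifted], of "4 * pi"]]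
    by (simp add: arccos_kernel_coeff_def algebra_simps add_divide_distrib)
  also have "(1 + t) / 8 + (arcsin t + t * arcsin t) / (4 * pi) = (t + 1) * (pi - arccos t) / (4 * pi)"
    using assms by (simp add: arccos_arcsin_eq field_simps)
  finally show ?thesis .
qed

theorem proposition1:
  fixes x :: "'n::finite \<Rightarrow> real^'d"
  assumes "CARD('d) \<ge> 2"
    and "\<And>i. norm (x i) = 1"
    and "inj x"
  shows "symmetric_matrix (H_inf x) \<and> pos_def_matrix (H_inf x)"
proof
  show "symmetric_matrix (H_inf x)"
    unfolding symmetric_matrix_def H_inf_def transpose_def by (simp add: vec_eq_iff inner_commute)
  show "pos_def_matrix (H_inf x)"
    unfolding pos_def_matrix_def
  proof (intro allI impI)
    fix v :: "real^'n"
    assume "v \<noteq> 0"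
    then obtain m where "v $ m \<noteq> 0"
      by (auto simp: vec_eq_iff)
    then have "quad_form (\<lambda>i j. (x i \<bullet> x j + 1) * (pi - arccos (x i \<bullet> x j)) / (4 * pi))
                 (\<lambda>i. v $ i) > 0"
      using quad_form_powser_pos[OF arccos_kernel_powser_sums arccos_kernel_coeff_pos assms(2,3)]
      by blast
    moreover have "(\<lambda>i j. H_inf x $ i $ j) =
                   (\<lambda>i j. (x i \<bullet> x j + 1) * (pi - arccos (x i \<bullet> x j)) / (4 * pi))"
      unfolding H_inf_def by simp
    ultimately show "v \<bullet> (H_inf x *v v) > 0"
      unfolding inner_matrix_vector_mult_eq_quad_form by simp
  qed
qed

end
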